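(* Let $N\ge2$, $h=\pi/N$, $x_j=-\cos(jh)$ for $0\le j\le N$ (Chebyshev–Gauss–Lobatto points), and for $1\le j\le N-1$ let $B_j\in\mathbb{P}_N$ be the unique polynomial with $B_j(\pm1)=0$ and $B_j''(x_i)=\delta_{ij}$ for $1\le i\le N-1$. Then $$B_j(x)=\sum_{k=0}^{N-2}\beta_{kj}\Big\{\partial_x^{-2}T_k(x)-\frac{1+x}{2}\,\partial_x^{-2}T_k(1)\Big\},\qquad B_j'(x)=\sum_{k=0}^{N-2}\beta_{kj}\Big\{\partial_x^{-1}T_k(x)-\frac{\partial_x^{-2}T_k(1)}{2}\Big\},$$ where $$\beta_{kj}=\frac{2}{c_kN}\Big\{T_k(x_j)-\frac{1-(-1)^{N+k}}{2}T_{N-1}(x_j)-\frac{1+(-1)^{N+k}}{2}T_N(x_j)\Big\},$$ with $c_0=2$ and $c_k=1$ for $k\ge1$.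
   Context: $T_k(x)=\cos(k\arccos x)$ is the Chebyshev polynomial of degree $k$. $\mathbb{P}_N$ is the space of polynomials of degree at most $N$. $\partial_x^{-1}u(x)=\int_{-1}^x u(t)\,dt$ and $\partial_x^{-2}u=\partial_x^{-1}(\partial_x^{-1}u)$. *)

theory Defs
  imports "HOL-Analysis.Analysis" "HOL-Computational_Algebra.Polynomial"
begin

definition cheb :: "nat \<Rightarrow> real \<Rightarrow> real" where
  "cheb k x = cos (real k * arccos x)"

definition cheb_int1 :: "nat \<Rightarrow> real \<Rightarrow> real" where
  "cheb_int1 k x = integral {-1..x} (cheb k)"

definition cheb_int2 :: "nat \<Rightarrow> real \<Rightarrow> real" where
  "cheb_int2 k x = integral {-1..x} (cheb_int1 k)"

definition cgl_node :: "nat \<Rightarrow> nat \<Rightarrow> real" where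
  "cgl_node N j = - cos (real j * pi / real N)"

definition cheb_c :: "nat \<Rightarrow> real" where
  "cheb_c k = (if k = 0 then 2 else 1)"

definition beta_coef :: "nat \<Rightarrow> nat \<Rightarrow> nat \<Rightarrow> real" where
  "beta_coef N k j = 2 / (cheb_c k * real N) *
     (cheb k (cgl_node N j)
      - (1 - (-1) ^ (N + k)) / 2 * cheb (N - 1) (cgl_node N j)
      - (1 + (-1) ^ (N + k)) / 2 * cheb N (cgl_node N j))"

end

theory Submission
  imports Defs
begin

text \<open>
  Since B'' has degree at most N - 2, it is determined by its values at the N - 1 interior
  nodes, so it suffices that the polynomial sum of beta_kj T_k takes the value delta_ij at x_i.
  At the nodes T_k(x_i) = cos(k (N - i) pi / N), so this is a discrete orthogonality relation
  for cosines, which follows from the closed form of the Dirichlet kernel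
  sum_{k<N} cos(k m pi / N). The T_(N-1) and T_N corrections in beta_kj make the (N-1)-st
  coefficient vanish, which is why the sum may stop at N - 2. Integrating twice from -1 and
  subtracting the linear function that restores B(1) = 0 recovers B, because a polynomial with
  vanishing second derivative and two zeros is zero.
\<close>

lemma sin_half_mult_sum_cos:
  "2 * sin (\<alpha> / 2) * (\<Sum>k<n. cos (real k * \<alpha>)) = sin ((real n - 1/2) * \<alpha>) + sin (\<alpha> / 2)"
proof (induction n)
  case (Suc n)
  have "2 * sin (\<alpha> / 2) * cos (real n * \<alpha>) = sin (real n * \<alpha> + \<alpha> / 2) - sin (real n * \<alpha> - \<alpha> / 2)"
    by (simp add: sin_add sin_diff)
  moreover have "real n * \<alpha> + \<alpha> / 2 = (real (Suc n) - 1/2) * \<alpha>" "real n * \<alpha> - \<alpha> / 2 = (real n - 1/2) * \<alpha>"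
    by (simp_all add: algebra_simps)
  ultimately show ?case using Suc by (simp add: algebra_simps)
next
  case 0
  have "(real 0 - 1/2) * \<alpha> = - (\<alpha> / 2)" by simp
  then show ?case by (simp only: sin_minus) simp
qed

lemma sum_cos_multiple_pi_div:
  fixes N m :: nat
  assumes "0 < m" "m < 2 * N"
  shows "(\<Sum>k<N. cos (real k * (real m * pi / real N))) = (if even m then 0 else 1)"
proof -
  define \<alpha> where "\<alpha> = real m * pi / real N"
  have "0 < \<alpha> / 2" "\<alpha> / 2 < pi"
    using assms by (auto simp: \<alpha>_def field_simps)
  then have pos: "sin (\<alpha> / 2) > 0" by (rule sin_gt_zero)
  have "(real N - 1/2) * \<alpha> = real m * pi - \<alpha> / 2"
    using assms by (simp add: \<alpha>_def field_simps)
  then have "sin ((real N - 1/2) * \<alpha>) = - ((-1) ^ m * sin (\<alpha> / 2))"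
    by (simp add: sin_diff)
  then have "2 * sin (\<alpha> / 2) * (\<Sum>k<N. cos (real k * \<alpha>)) = 2 * sin (\<alpha> / 2) * (if even m then 0 else 1)"
    unfolding sin_half_mult_sum_cos by simp
  with pos show ?thesis unfolding \<alpha>_def by simp
qed

lemma sum_cos_mult_cos_multiple_pi_div:
  fixes N a b :: nat
  assumes "1 \<le> a" "a < N" "1 \<le> b" "b < N"
  shows "(\<Sum>k<N. cos (real k * (real a * pi / real N)) * cos (real k * (real b * pi / real N)))
    = (if a = b then real N / 2 else 0) + (if even (a + b) then 0 else 1)"
proof -
  define d where "d = nat \<bar>int a - int b\<bar>"
  have pt: "cos (real k * (real a * pi / real N)) * cos (real k * (real b * pi / real N))
     = (cos (real k * (real d * pi / real N)) + cos (real k * (real (a + b) * pi / real N))) / 2" for k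
  proof -
    have "real k * (real a * pi / real N) - real k * (real b * pi / real N)
        = (real k * pi / real N) * (real a - real b)"
      by (simp add: algebra_simps diff_divide_distrib)
    then have "real k * (real d * pi / real N)
        = \<bar>real k * (real a * pi / real N) - real k * (real b * pi / real N)\<bar>"
      by (simp add: d_def abs_mult)
    then show ?thesis
      by (simp add: cos_times_cos algebra_simps add_divide_distrib)
  qed
  have sum_sum: "(\<Sum>k<N. cos (real k * (real (a + b) * pi / real N))) = (if even (a + b) then 0 else 1)"
    using assms by (intro sum_cos_multiple_pi_div) auto
  have sum_diff: "(\<Sum>k<N. cos (real k * (real d * pi / real N)))
      = (if a = b then real N else if even (a + b) then 0 else 1)"
  proof (cases "a = b")
    case False
    have "even d = even (a + b)" by (auto simp: d_def even_nat_iff)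
    moreover have "(\<Sum>k<N. cos (real k * (real d * pi / real N))) = (if even d then 0 else 1)"
      using assms False by (intro sum_cos_multiple_pi_div) (auto simp: d_def)
    ultimately show ?thesis using False by simp
  qed (simp add: d_def)
  have "(\<Sum>k<N. cos (real k * (real a * pi / real N)) * cos (real k * (real b * pi / real N)))
     = ((\<Sum>k<N. cos (real k * (real d * pi / real N))) + (\<Sum>k<N. cos (real k * (real (a + b) * pi / real N)))) / 2"
    by (simp only: pt sum.distrib sum_divide_distrib[symmetric])
  also have "\<dots> = (if a = b then real N / 2 else 0) + (if even (a + b) then 0 else 1)"
    unfolding sum_sum sum_diff by (cases "a = b"; cases "even (a + b)") simp_all
  finally show ?thesis .
qed

lemma sum_alternating_cos_multiple_pi_div:
  fixes N a :: nat
  assumes "1 \<le> a" "a < N"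
  shows "(\<Sum>k<N. (-1) ^ k * cos (real k * (real a * pi / real N))) = (if even (a + N) then 0 else 1)"
proof -
  have "(-1) ^ k * cos (real k * (real a * pi / real N)) = cos (real k * (real (a + N) * pi / real N))" for k
  proof -
    have "real k * (real (a + N) * pi / real N) = real k * (real a * pi / real N) + real k * pi"
      using assms by (simp add: algebra_simps add_divide_distrib)
    then show ?thesis by (simp add: cos_add)
  qed
  then have "(\<Sum>k<N. (-1) ^ k * cos (real k * (real a * pi / real N)))
      = (\<Sum>k<N. cos (real k * (real (a + N) * pi / real N)))"
    by simp
  also have "\<dots> = (if even (a + N) then 0 else 1)"
    using assms by (intro sum_cos_multiple_pi_div) auto
  finally show ?thesis .
qed

lemma sum_cos_beta_numerator:
  fixes N a b :: nat
  assumes "1 \<le> a" "a < N" "1 \<le> b" "b < N"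
  defines "ta \<equiv> real a * pi / real N" and "tb \<equiv> real b * pi / real N"
  shows "(\<Sum>k<N. (cos (real k * tb) - (1 - (-1) ^ (N + k)) / 2 * C - (1 + (-1) ^ (N + k)) / 2 * E)
            * cos (real k * ta))
       = (if a = b then real N / 2 else 0) + (if even (a + b) then 0 else 1)
         - (C + E) / 2 * (if even a then 0 else 1) + (-1) ^ N * (C - E) / 2 * (if even (a + N) then 0 else 1)"
proof -
  have summand: "(cos (real k * tb) - (1 - (-1) ^ (N + k)) / 2 * C - (1 + (-1) ^ (N + k)) / 2 * E)
        * cos (real k * ta)
      = cos (real k * ta) * cos (real k * tb) - (C + E) / 2 * cos (real k * ta)
        + (-1) ^ N * (C - E) / 2 * ((-1) ^ k * cos (real k * ta))" for k
    by (simp add: power_add algebra_simps diff_divide_distrib add_divide_distrib)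
  have sum_cos: "(\<Sum>k<N. cos (real k * ta)) = (if even a then 0 else 1)"
    using assms unfolding ta_def by (intro sum_cos_multiple_pi_div) auto
  show ?thesis
    unfolding summand sum.distrib sum_subtractf sum_distrib_left[symmetric] sum_cos
      sum_cos_mult_cos_multiple_pi_div[OF assms(1-4), folded ta_def tb_def]
      sum_alternating_cos_multiple_pi_div[OF assms(1,2), folded ta_def] ..
qed

lemma arccos_cgl_node:
  assumes "0 < N" "i \<le> N"
  shows "arccos (cgl_node N i) = real (N - i) * pi / real N"
proof -
  have "0 \<le> real i * pi / real N" "real i * pi / real N \<le> pi"
    using assms by (auto simp: field_simps)
  then have "arccos (cgl_node N i) = pi - real i * pi / real N"
    by (simp add: cgl_node_def arccos_minus arccos_cos)
  also have "\<dots> = real (N - i) * pi / real N"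
    using assms by (simp add: field_simps)
  finally show ?thesis .
qed

lemma cheb_cgl_node:
  assumes "0 < N" "i \<le> N"
  shows "cheb k (cgl_node N i) = cos (real k * (real (N - i) * pi / real N))"
  by (simp add: cheb_def arccos_cgl_node[OF assms])

lemma cgl_node_in_interval: "cgl_node N i \<in> {-1..1}"
  by (simp add: cgl_node_def)

lemma inj_on_cgl_node:
  assumes "0 < N"
  shows "inj_on (cgl_node N) {..N}"
proof
  fix i j assume ij: "i \<in> {..N}" "j \<in> {..N}" "cgl_node N i = cgl_node N j"
  then have "real (N - i) * pi / real N = real (N - j) * pi / real N"
    using assms by (metis arccos_cgl_node atMost_iff)
  with assms ij(1,2) show "i = j" by simp
qed

lemma sum_cheb_c_weights:
  fixes g :: "nat \<Rightarrow> real"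
  assumes "2 \<le> N" "g (N - 1) = 0"
  shows "(\<Sum>k=0..N-2. 2 / (cheb_c k * real N) * g k) = 2 / real N * (\<Sum>k<N. g k) - g 0 / real N"
proof -
  have "{..<N} = insert (N - 1) {0..N-2}"
    using assms(1) by auto
  then have "(\<Sum>k<N. g k) = (\<Sum>k=0..N-2. g k)"
    using assms by simp
  moreover have "(\<Sum>k=0..N-2. 2 / (cheb_c k * real N) * g k)
      = (\<Sum>k=0..N-2. 2 / real N * g k - (if k = 0 then g 0 / real N else 0))"
    by (rule sum.cong) (auto simp: cheb_c_def)
  ultimately show ?thesis
    by (simp add: sum_subtractf sum_distrib_left)
qed

lemma beta_coef_cheb_cgl_node:
  assumes "2 \<le> N" "1 \<le> i" "i \<le> N - 1" "1 \<le> j" "j \<le> N - 1"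
  shows "(\<Sum>k=0..N-2. beta_coef N k j * cheb k (cgl_node N i)) = (if i = j then 1 else 0)"
proof -
  define a b where "a = N - i" and "b = N - j"
  define ta tb where "ta = real a * pi / real N" and "tb = real b * pi / real N"
  define C E where "C = cos (real (N - 1) * tb)" and "E = cos (real N * tb)"
  define g where "g k = (cos (real k * tb) - (1 - (-1) ^ (N + k)) / 2 * C - (1 + (-1) ^ (N + k)) / 2 * E)
      * cos (real k * ta)" for k
  have ab: "1 \<le> a" "a < N" "1 \<le> b" "b < N"
    using assms by (auto simp: a_def b_def)
  have summand: "beta_coef N k j * cheb k (cgl_node N i) = 2 / (cheb_c k * real N) * g k" for k
    using assms unfolding beta_coef_def g_def C_def E_def ta_def tb_def a_def b_def
    by (simp add: cheb_cgl_node)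
  have "odd (N + (N - 1))"
    using assms(1) by simp
  then have "g (N - 1) = 0"
    by (simp add: g_def C_def)
  then have "(\<Sum>k=0..N-2. beta_coef N k j * cheb k (cgl_node N i))
      = 2 / real N * (\<Sum>k<N. g k) - g 0 / real N"
    unfolding summand by (rule sum_cheb_c_weights[OF assms(1)])
  also have "\<dots> = (if a = b then 1 else 0)"
  proof -
    have "real N * tb = real b * pi" using assms(1) by (simp add: tb_def)
    then have "E = (-1) ^ b" by (simp add: E_def)
    then show ?thesis
      using assms(1) unfolding g_def sum_cos_beta_numerator[OF ab, folded ta_def tb_def]
      by (cases "a = b"; cases "even a"; cases "even b"; cases "even N") (simp_all add: field_simps)
  qed
  also have "(a = b) = (i = j)"
    using assms by (auto simp: a_def b_def)
  finally show ?thesis .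
qed

fun cheb_poly :: "nat \<Rightarrow> real poly" where
  "cheb_poly 0 = 1"
| "cheb_poly (Suc 0) = [:0, 1:]"
| "cheb_poly (Suc (Suc n)) = [:0, 2:] * cheb_poly (Suc n) - cheb_poly n"

lemma poly_cheb_poly_cos: "poly (cheb_poly n) (cos t) = cos (real n * t)"
proof (induction n rule: cheb_poly.induct)
  case (3 n)
  have "cos (real (Suc (Suc n)) * t) = cos (real (Suc n) * t + t)"
    "cos (real n * t) = cos (real (Suc n) * t - t)"
    by (simp_all add: algebra_simps)
  then show ?case
    using "3" by (simp add: cos_add cos_diff)
qed simp_all

lemma degree_cheb_poly: "degree (cheb_poly n) \<le> n"
proof (induction n rule: cheb_poly.induct)
  case (3 n)
  have "degree ([:0, 2:] * cheb_poly (Suc n)) \<le> Suc (Suc n)"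
    using degree_mult_le[of "[:0, 2:]" "cheb_poly (Suc n)"] "3" by simp
  with "3" show ?case by (simp add: degree_diff_le)
qed simp_all

lemma cheb_eq_poly_cheb_poly: "x \<in> {-1..1} \<Longrightarrow> cheb k x = poly (cheb_poly k) x"
  using poly_cheb_poly_cos[of k "arccos x"] by (simp add: cheb_def cos_arccos)

lemma pderiv_sum: "pderiv (sum f A) = (\<Sum>x\<in>A. pderiv (f x))"
  using higher_pderiv_sum[of 1 f A] by simp

definition poly_antideriv :: "'a::field_char_0 poly \<Rightarrow> 'a poly" where
  "poly_antideriv p = (\<Sum>i\<le>degree p. monom (coeff p i / of_nat (Suc i)) (Suc i))"

lemma pderiv_poly_antideriv: "pderiv (poly_antideriv p) = p"
proof -
  have "pderiv (poly_antideriv p) = (\<Sum>i\<le>degree p. monom (coeff p i) i)"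
    by (simp add: poly_antideriv_def pderiv_sum pderiv_monom del: of_nat_Suc)
  also have "\<dots> = p"
    by (rule poly_as_sum_of_monoms)
  finally show ?thesis .
qed

definition poly_integral :: "'a::field_char_0 \<Rightarrow> 'a poly \<Rightarrow> 'a poly" where
  "poly_integral a p = poly_antideriv p - [:poly (poly_antideriv p) a:]"

lemma pderiv_poly_integral [simp]: "pderiv (poly_integral a p) = p"
  by (simp add: poly_integral_def pderiv_diff pderiv_poly_antideriv)

lemma poly_poly_integral_base [simp]: "poly (poly_integral a p) a = 0"
  by (simp add: poly_integral_def)

lemma integral_poly:
  fixes a x :: real
  assumes "a \<le> x"
  shows "integral {a..x} (poly p) = poly (poly_integral a p) x"
proof -
  have "(poly p has_integral poly (poly_integral a p) x - poly (poly_integral a p) a) {a..x}"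
  proof (rule fundamental_theorem_of_calculus[OF assms])
    fix t
    have "(poly (poly_integral a p) has_real_derivative poly p t) (at t)"
      using poly_DERIV[of "poly_integral a p" t] by simp
    then show "(poly (poly_integral a p) has_vector_derivative poly p t) (at t within {a..x})"
      by (simp add: has_real_derivative_iff_has_vector_derivative has_vector_derivative_at_within)
  qed
  then show ?thesis
    by (simp add: integral_unique)
qed

lemma pderiv2_eq_imp_eq:
  fixes p q :: "'a::field_char_0 poly"
  assumes "pderiv (pderiv p) = pderiv (pderiv q)" "poly p a = poly q a" "poly p b = poly q b" "a \<noteq> b"
  shows "p = q"
proof -
  have "pderiv (pderiv (p - q)) = 0"
    using assms(1) by (simp add: pderiv_diff)
  then obtain h where "pderiv (p - q) = [:h:]"
    using pderiv_iszero by blast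
  then have "degree (p - q) \<le> 1"
    using degree_pderiv[of "p - q"] by simp
  then have "p - q = 0"
    using assms(2-4) by (intro poly_eqI_degree[of "{a, b}"]) auto
  then show ?thesis by simp
qed

lemma cheb_int1_eq_poly:
  "x \<in> {-1..1} \<Longrightarrow> cheb_int1 k x = poly (poly_integral (-1) (cheb_poly k)) x"
  unfolding cheb_int1_def
  by (subst integral_cong[of _ _ "poly (cheb_poly k)"]) (auto simp: cheb_eq_poly_cheb_poly integral_poly)

lemma cheb_int2_eq_poly:
  "x \<in> {-1..1} \<Longrightarrow> cheb_int2 k x = poly (poly_integral (-1) (poly_integral (-1) (cheb_poly k))) x"
  unfolding cheb_int2_def
  by (subst integral_cong[of _ _ "poly (poly_integral (-1) (cheb_poly k))"])
    (auto simp: cheb_int1_eq_poly integral_poly)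

lemma pderiv2_eq_cheb_sum:
  fixes B :: "real poly"
  assumes "2 \<le> N" "1 \<le> j" "j \<le> N - 1" "degree B \<le> N"
    and "\<And>i. 1 \<le> i \<Longrightarrow> i \<le> N - 1 \<Longrightarrow>
           poly (pderiv (pderiv B)) (cgl_node N i) = (if i = j then 1 else 0)"
  shows "pderiv (pderiv B) = (\<Sum>k=0..N-2. smult (beta_coef N k j) (cheb_poly k))"
proof (rule poly_eqI_degree[of "cgl_node N ` {1..N-1}"])
  show "poly (pderiv (pderiv B)) x = poly (\<Sum>k=0..N-2. smult (beta_coef N k j) (cheb_poly k)) x"
    if "x \<in> cgl_node N ` {1..N-1}" for x
    using that assms cgl_node_in_interval
    by (auto simp: poly_sum cheb_eq_poly_cheb_poly[symmetric] beta_coef_cheb_cgl_node mult.commute)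
  have "card (cgl_node N ` {1..N-1}) = N - 1"
    using assms(1) by (subst card_image[OF inj_on_subset[OF inj_on_cgl_node]]) auto
  moreover have "degree (pderiv (pderiv B)) \<le> N - 2"
    using assms(4) by (simp add: degree_pderiv)
  moreover have "degree (\<Sum>k=0..N-2. smult (beta_coef N k j) (cheb_poly k)) \<le> N - 2"
    by (intro degree_sum_le) (auto intro: order.trans[OF degree_smult_le] order.trans[OF degree_cheb_poly])
  ultimately show "degree (pderiv (pderiv B)) < card (cgl_node N ` {1..N-1})"
    "degree (\<Sum>k=0..N-2. smult (beta_coef N k j) (cheb_poly k)) < card (cgl_node N ` {1..N-1})"
    using assms(1) by linarith+
qed

theorem proposition3p4:
  fixes N j :: nat and B :: "real poly"
  assumes "N \<ge> 2" and "1 \<le> j" and "j \<le> N - 1"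
    and "degree B \<le> N"
    and "poly B (-1) = 0" and "poly B 1 = 0"
    and "\<And>i. 1 \<le> i \<Longrightarrow> i \<le> N - 1 \<Longrightarrow>
           poly (pderiv (pderiv B)) (cgl_node N i) = (if i = j then 1 else 0)"
  shows "\<forall>x\<in>{-1..1::real}.
           poly B x = (\<Sum>k=0..N-2. beta_coef N k j *
              (cheb_int2 k x - (1 + x) / 2 * cheb_int2 k 1))
         \<and> poly (pderiv B) x = (\<Sum>k=0..N-2. beta_coef N k j *
              (cheb_int1 k x - cheb_int2 k 1 / 2))"
proof
  define I where "I = poly_integral (-1 :: real)"
  define P1 where "P1 = (\<Sum>k=0..N-2. smult (beta_coef N k j) (I (cheb_poly k)))"
  define P2 where "P2 = (\<Sum>k=0..N-2. smult (beta_coef N k j) (I (I (cheb_poly k))))"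
  have P_derivs: "pderiv P2 = P1" "pderiv P1 = (\<Sum>k=0..N-2. smult (beta_coef N k j) (cheb_poly k))"
    by (simp_all add: P1_def P2_def I_def pderiv_sum pderiv_smult)
  have B_eq: "B = P2 - smult (poly P2 1 / 2) [:1, 1:]"
  proof (rule pderiv2_eq_imp_eq)
    show "pderiv (pderiv B) = pderiv (pderiv (P2 - smult (poly P2 1 / 2) [:1, 1:]))"
      using pderiv2_eq_cheb_sum[OF assms(1-4,7)]
      by (simp add: pderiv_diff pderiv_smult pderiv_pCons P_derivs)
    show "poly B (-1) = poly (P2 - smult (poly P2 1 / 2) [:1, 1:]) (-1)"
      using assms(5) by (simp add: P2_def I_def poly_sum)
    show "poly B 1 = poly (P2 - smult (poly P2 1 / 2) [:1, 1:]) 1"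
      using assms(6) by simp
  qed simp
  fix x :: real
  assume "x \<in> {-1..1}"
  then have "poly P2 x = (\<Sum>k=0..N-2. beta_coef N k j * cheb_int2 k x)"
    "poly P1 x = (\<Sum>k=0..N-2. beta_coef N k j * cheb_int1 k x)"
    "poly P2 1 = (\<Sum>k=0..N-2. beta_coef N k j * cheb_int2 k 1)"
    by (simp_all add: P1_def P2_def I_def poly_sum cheb_int1_eq_poly cheb_int2_eq_poly)
  moreover have "poly B x = poly P2 x - (1 + x) / 2 * poly P2 1"
    "poly (pderiv B) x = poly P1 x - poly P2 1 / 2"
    unfolding B_eq by (simp_all add: pderiv_diff pderiv_smult pderiv_pCons P_derivs algebra_simps)
  ultimately show "poly B x = (\<Sum>k=0..N-2. beta_coef N k j * (cheb_int2 k x - (1 + x) / 2 * cheb_int2 k 1))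
      \<and> poly (pderiv B) x = (\<Sum>k=0..N-2. beta_coef N k j * (cheb_int1 k x - cheb_int2 k 1 / 2))"
    by (simp add: right_diff_distrib sum_subtractf sum_distrib_left sum_divide_distrib mult.left_commute)
qed

end
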